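(* For every integer $m\ge1$ there exist $C_m>0$ and $\theta_m\in(0,\pi/2)$ such that for all $\theta\in(0,\theta_m]$ the operator $U_{m,\theta}$ is unitary and $$\|M_{m,\theta}-U_{m,\theta}\|_F\le C_m\,\theta^m .$$
   Context: $\|A\|_F=\sqrt{\mathrm{tr}(A^*A)}$ is the Frobenius norm. $M_{m,\theta}$ is the $m$-qubit operator with $M_{m,\theta}|x_1\cdots x_m\rangle=\bigotimes_{j=1}^m e^{-i\theta x_{j-1}X}|x_j\rangle$ (indices mod $m$, $x_0=x_m$, $X$ Pauli-$X$). For $x\in\{0,1\}^m$ let $\bar x$ be its complement and $\gamma_x=\langle\bar x|M_{m,\theta}^\dagger M_{m,\theta}|x\rangle$. $U_{m,\theta}$ is the $m$-qubit operator defined on basis states by $U_{m,\theta}|x\rangle=M_{m,\theta}|x\rangle$ if $x_1=0$, and $U_{m,\theta}|x\rangle=\big(M_{m,\theta}|x\rangle-\gamma_xM_{m,\theta}|\bar x\rangle\big)/\sqrt{1-|\gamma_x|^2}$ if $x_1=1$. *)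

theory Defs
  imports "HOL-Analysis.Analysis"
begin

text \<open>Computational basis of m qubits: bit strings x = x_1 ... x_m, represented as
  boolean lists of length m (list position k, 0-based, is qubit x_(k+1); True = 1).
  An m-qubit operator A is represented by its matrix entries A y x = <y|A|x>.\<close>

definition bits :: "nat \<Rightarrow> bool list set" where
  "bits m = {xs. length xs = m}"

definition compl_bits :: "bool list \<Rightarrow> bool list" where
  "compl_bits x = map Not x"

text \<open>Matrix entries of exp(-i t X) for Pauli X: exp(-i t X) = cos t I - i sin t X.
  The rotation angle is t = theta * c with c the control bit.\<close>
definition rotX :: "real \<Rightarrow> bool \<Rightarrow> bool \<Rightarrow> complex" where
  "rotX t y x = (if y = x then complex_of_real (cos t) else - \<i> * complex_of_real (sin t))"

definition Mop :: "nat \<Rightarrow> real \<Rightarrow> bool list \<Rightarrow> bool list \<Rightarrow> complex" where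
  "Mop m \<theta> y x = (\<Prod>k<m. rotX (\<theta> * (if x ! ((k + m - 1) mod m) then 1 else 0)) (y ! k) (x ! k))"

definition gam :: "nat \<Rightarrow> real \<Rightarrow> bool list \<Rightarrow> complex" where
  "gam m \<theta> x = (\<Sum>y\<in>bits m. cnj (Mop m \<theta> y (compl_bits x)) * Mop m \<theta> y x)"

definition Uop :: "nat \<Rightarrow> real \<Rightarrow> bool list \<Rightarrow> bool list \<Rightarrow> complex" where
  "Uop m \<theta> y x =
     (if \<not> x ! 0 then Mop m \<theta> y x
      else (Mop m \<theta> y x - gam m \<theta> x * Mop m \<theta> y (compl_bits x))
             / complex_of_real (sqrt (1 - (cmod (gam m \<theta> x))\<^sup>2)))"

definition unitary_op :: "nat \<Rightarrow> (bool list \<Rightarrow> bool list \<Rightarrow> complex) \<Rightarrow> bool" where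
  "unitary_op m A \<longleftrightarrow>
     (\<forall>x\<in>bits m. \<forall>x'\<in>bits m.
        (\<Sum>y\<in>bits m. cnj (A y x) * A y x') = (if x = x' then 1 else 0) \<and>
        (\<Sum>y\<in>bits m. A x y * cnj (A x' y)) = (if x = x' then 1 else 0))"

definition frob :: "nat \<Rightarrow> (bool list \<Rightarrow> bool list \<Rightarrow> complex) \<Rightarrow> real" where
  "frob m A = sqrt (\<Sum>x\<in>bits m. \<Sum>y\<in>bits m. (cmod (A y x))\<^sup>2)"

end

theory Submission
  imports Defs "Jordan_Normal_Form.Determinant"
begin

text \<open>The Gram matrix of the columns of M factorises over the qubits: its entry at (x, x') is
  the product over k of the (x_k, x'_k) entries of the rotations exp(-i \<theta> (x'_{k-1} - x_{k-1}) X).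
  Unless x' = x or x' = xbar, going round the cycle one finds a k where x and x' differ but their
  predecessors agree, and that factor is an off-diagonal entry of the identity. So the columns of
  M are orthonormal except for the overlaps \<gamma>_x within the pairs {x, xbar}, of modulus
  |sin \<theta>|^m. U orthonormalises each pair by one Gram-Schmidt step, hence has orthonormal
  columns and is unitary, and each modified column moves by
  ||M x - U x||^2 = 2 - 2 sqrt(1 - |\<gamma>_x|^2) \<le> 2 |\<gamma>_x|^2 \<le> 2 \<theta>^(2m).\<close>

lemma finite_bits: "finite (bits m)"
  using finite_lists_length_eq[of "UNIV :: bool set" m] by (simp add: bits_def)

lemma card_bits: "card (bits m) = 2 ^ m"
  using card_lists_length_eq[of "UNIV :: bool set" m] by (simp add: bits_def)

lemma bits_Suc: "bits (Suc m) = (\<lambda>(b, ys). b # ys) ` (UNIV \<times> bits m)"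
  by (auto simp: bits_def image_iff length_Suc_conv)

lemma sum_bits_prod:
  fixes f :: "nat \<Rightarrow> bool \<Rightarrow> 'a :: comm_semiring_1"
  shows "(\<Sum>y\<in>bits m. \<Prod>k<m. f k (y ! k)) = (\<Prod>k<m. \<Sum>b\<in>UNIV. f k b)"
proof (induction m arbitrary: f)
  case 0
  then show ?case by (simp add: bits_def)
next
  case (Suc m)
  have "inj_on (\<lambda>(b, ys). b # ys) (UNIV \<times> bits m)"
    by (auto simp: inj_on_def)
  then have "(\<Sum>y\<in>bits (Suc m). \<Prod>k<Suc m. f k (y ! k))
      = (\<Sum>(b, ys)\<in>UNIV \<times> bits m. \<Prod>k<Suc m. f k ((b # ys) ! k))"
    unfolding bits_Suc by (simp add: sum.reindex case_prod_unfold)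
  also have "\<dots> = (\<Sum>b\<in>UNIV. \<Sum>ys\<in>bits m. f 0 b * (\<Prod>k<m. f (Suc k) (ys ! k)))"
    by (subst sum.cartesian_product[symmetric])
      (simp only: prod.lessThan_Suc_shift nth_Cons_0 nth_Cons_Suc)
  also have "\<dots> = (\<Prod>k<Suc m. \<Sum>b\<in>UNIV. f k b)"
    by (simp only: sum_distrib_left[symmetric] sum_distrib_right[symmetric]
        Suc.IH[of "\<lambda>k. f (Suc k)"] prod.lessThan_Suc_shift)
  finally show ?case .
qed

lemma length_compl_bits [simp]: "length (compl_bits x) = length x"
  by (simp add: compl_bits_def)

lemma nth_compl_bits [simp]: "k < length x \<Longrightarrow> compl_bits x ! k = (\<not> x ! k)"
  by (simp add: compl_bits_def)

lemma compl_bits_compl_bits [simp]: "compl_bits (compl_bits x) = x"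
  by (simp add: compl_bits_def comp_def)

lemma compl_bits_eq_iff [simp]: "compl_bits x = compl_bits x' \<longleftrightarrow> x = x'"
  by (metis compl_bits_compl_bits)

lemma compl_bits_in_bits [simp]: "compl_bits x \<in> bits m \<longleftrightarrow> x \<in> bits m"
  by (simp add: bits_def)

lemma cyclic_induct:
  fixes m :: nat
  assumes "j < m" "P j" "k < m"
    and step: "\<And>k. k < m \<Longrightarrow> P ((k + m - 1) mod m) \<Longrightarrow> P k"
  shows "P k"
proof -
  have "P ((j + i) mod m)" for i
  proof (induction i)
    case 0
    show ?case using \<open>P j\<close> \<open>j < m\<close> by simp
  next
    case (Suc i)
    have "((j + Suc i) mod m + m - 1) mod m = ((j + Suc i) mod m + (m - 1)) mod m"
      using \<open>j < m\<close> by simp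
    also have "\<dots> = (j + Suc i + (m - 1)) mod m"
      by (simp add: mod_add_left_eq)
    also have "j + Suc i + (m - 1) = j + i + m"
      using \<open>j < m\<close> by simp
    finally show ?case
      using step[of "(j + Suc i) mod m"] Suc \<open>j < m\<close> by simp
  qed
  from this[of "k + m - j"] show "P k"
    using \<open>j < m\<close> \<open>k < m\<close> by simp
qed

lemma orthonormal_rows_if_orthonormal_cols:
  fixes A :: "'a \<Rightarrow> 'a \<Rightarrow> complex"
  assumes "finite S"
    and cols: "\<forall>x\<in>S. \<forall>x'\<in>S. (\<Sum>y\<in>S. cnj (A y x) * A y x') = (if x = x' then 1 else 0)"
  shows "\<forall>x\<in>S. \<forall>x'\<in>S. (\<Sum>y\<in>S. A x y * cnj (A x' y)) = (if x = x' then 1 else 0)"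
proof -
  define n where "n = card S"
  obtain e where e: "bij_betw e {..<n} S"
    using ex_bij_betw_nat_finite[OF \<open>finite S\<close>] by (metis n_def lessThan_atLeast0)
  have e_in: "i < n \<Longrightarrow> e i \<in> S" for i
    using e by (auto simp: bij_betw_def)
  have e_eq_iff: "i < n \<Longrightarrow> j < n \<Longrightarrow> e i = e j \<longleftrightarrow> i = j" for i j
    using e by (auto simp: bij_betw_def inj_on_def)
  have reindex: "(\<Sum>y\<in>S. f y) = (\<Sum>k<n. f (e k))" for f :: "'a \<Rightarrow> complex"
    using sum.reindex_bij_betw[OF e, of f] by simp
  define B where "B = mat n n (\<lambda>(i, j). A (e i) (e j))"
  define B' where "B' = mat n n (\<lambda>(i, j). cnj (A (e j) (e i)))"
  have "B' * B = 1\<^sub>m n"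
  proof (rule eq_matI)
    fix i j assume "i < dim_row (1\<^sub>m n)" "j < dim_col (1\<^sub>m n)"
    then have ij: "i < n" "j < n" by auto
    have "(B' * B) $$ (i, j) = (\<Sum>k<n. cnj (A (e k) (e i)) * A (e k) (e j))"
      using ij by (auto simp: B_def B'_def scalar_prod_def lessThan_atLeast0 intro!: sum.cong)
    also have "\<dots> = (\<Sum>y\<in>S. cnj (A y (e i)) * A y (e j))"
      by (rule reindex[symmetric])
    also have "\<dots> = (if i = j then 1 else 0)"
      using cols e_in e_eq_iff ij by simp
    finally show "(B' * B) $$ (i, j) = 1\<^sub>m n $$ (i, j)" using ij by simp
  qed (auto simp: B_def B'_def)
  then have BB': "B * B' = 1\<^sub>m n"
    by (rule mat_mult_left_right_inverse[rotated 2]) (auto simp: B_def B'_def)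
  show ?thesis
  proof (intro ballI)
    fix x x' assume "x \<in> S" "x' \<in> S"
    obtain i where i: "i < n" "x = e i"
      using e \<open>x \<in> S\<close> by (metis bij_betw_iff_bijections lessThan_iff)
    obtain j where j: "j < n" "x' = e j"
      using e \<open>x' \<in> S\<close> by (metis bij_betw_iff_bijections lessThan_iff)
    have "(\<Sum>y\<in>S. A x y * cnj (A x' y)) = (B * B') $$ (i, j)"
      using i j by (auto simp: reindex B_def B'_def scalar_prod_def lessThan_atLeast0 intro!: sum.cong)
    then show "(\<Sum>y\<in>S. A x y * cnj (A x' y)) = (if x = x' then 1 else 0)"
      using BB' i j e_eq_iff by simp
  qed
qed

lemma sum_cnj_rotX_mult:
  "(\<Sum>b\<in>UNIV. cnj (rotX a b u) * rotX a' b v) = rotX (a' - a) u v"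
  by (cases u; cases v) (auto simp: UNIV_bool rotX_def cos_diff sin_diff algebra_simps complex_eq_iff)

definition ctrl_angle :: "nat \<Rightarrow> real \<Rightarrow> bool list \<Rightarrow> nat \<Rightarrow> real" where
  "ctrl_angle m \<theta> x k = \<theta> * (if x ! ((k + m - 1) mod m) then 1 else 0)"

definition gram :: "nat \<Rightarrow> real \<Rightarrow> bool list \<Rightarrow> bool list \<Rightarrow> complex" where
  "gram m \<theta> x x' = (\<Sum>y\<in>bits m. cnj (Mop m \<theta> y x) * Mop m \<theta> y x')"

lemma gram_eq_prod:
  "gram m \<theta> x x' = (\<Prod>k<m. rotX (ctrl_angle m \<theta> x' k - ctrl_angle m \<theta> x k) (x ! k) (x' ! k))"
proof -
  have "gram m \<theta> x x' = (\<Sum>y\<in>bits m. \<Prod>k<m.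
      cnj (rotX (ctrl_angle m \<theta> x k) (y ! k) (x ! k)) * rotX (ctrl_angle m \<theta> x' k) (y ! k) (x' ! k))"
    unfolding gram_def Mop_def ctrl_angle_def by (simp add: prod.distrib)
  also have "\<dots> = (\<Prod>k<m. \<Sum>b\<in>UNIV.
      cnj (rotX (ctrl_angle m \<theta> x k) b (x ! k)) * rotX (ctrl_angle m \<theta> x' k) b (x' ! k))"
    by (rule sum_bits_prod)
  finally show ?thesis
    by (simp only: sum_cnj_rotX_mult)
qed

lemma gram_swap: "gram m \<theta> x' x = cnj (gram m \<theta> x x')"
  unfolding gram_def by (simp add: mult.commute)

lemma gam_eq_gram: "gam m \<theta> x = gram m \<theta> (compl_bits x) x"
  unfolding gam_def gram_def ..

lemma gram_compl_right: "gram m \<theta> x (compl_bits x) = cnj (gam m \<theta> x)"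
  by (simp add: gam_eq_gram gram_swap[of m \<theta> x])

lemma gram_diag [simp]: "gram m \<theta> x x = 1"
  by (simp add: gram_eq_prod rotX_def)

lemma gram_eq_0:
  assumes "x \<in> bits m" "x' \<in> bits m" "x \<noteq> x'" "x' \<noteq> compl_bits x"
  shows "gram m \<theta> x x' = 0"
proof -
  have len: "length x = m" "length x' = m"
    using assms by (auto simp: bits_def)
  have "\<exists>j<m. x ! j = x' ! j"
  proof (rule ccontr)
    assume "\<not> (\<exists>j<m. x ! j = x' ! j)"
    then have "x' = compl_bits x"
      using len by (auto simp: list_eq_iff_nth_eq)
    with assms(4) show False ..
  qed
  then obtain j where j: "j < m" "x ! j = x' ! j" by blast
  have "\<exists>k<m. x ! k \<noteq> x' ! k \<and> x ! ((k + m - 1) mod m) = x' ! ((k + m - 1) mod m)"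
  proof (rule ccontr)
    assume "\<not> ?thesis"
    then have "\<forall>k<m. x ! k = x' ! k"
      using cyclic_induct[of j m "\<lambda>k. x ! k = x' ! k"] j by blast
    with assms(3) len show False by (simp add: list_eq_iff_nth_eq)
  qed
  then obtain k where
    "k < m" "x ! k \<noteq> x' ! k" "x ! ((k + m - 1) mod m) = x' ! ((k + m - 1) mod m)"
    by blast
  then have "rotX (ctrl_angle m \<theta> x' k - ctrl_angle m \<theta> x k) (x ! k) (x' ! k) = 0"
    by (simp add: ctrl_angle_def rotX_def)
  with \<open>k < m\<close> show ?thesis
    unfolding gram_eq_prod by (intro prod_zero) auto
qed

lemma norm_gam:
  assumes "x \<in> bits m"
  shows "cmod (gam m \<theta> x) = \<bar>sin \<theta>\<bar> ^ m"
proof -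
  have len: "length x = m" using assms by (simp add: bits_def)
  have "cmod (gam m \<theta> x) = (\<Prod>k<m.
      cmod (rotX (ctrl_angle m \<theta> x k - ctrl_angle m \<theta> (compl_bits x) k) (compl_bits x ! k) (x ! k)))"
    by (simp add: gam_eq_gram gram_eq_prod prod_norm)
  also have "\<dots> = (\<Prod>k<m. \<bar>sin \<theta>\<bar>)"
    using len by (intro prod.cong) (simp_all add: ctrl_angle_def rotX_def norm_mult)
  finally show ?thesis by simp
qed

definition cross_gram :: "nat \<Rightarrow> real \<Rightarrow> bool list \<Rightarrow> bool list \<Rightarrow> complex" where
  "cross_gram m \<theta> a x = (\<Sum>y\<in>bits m. cnj (Mop m \<theta> y a) * Uop m \<theta> y x)"

lemma cross_gram_eq_gram: "\<not> x ! 0 \<Longrightarrow> cross_gram m \<theta> a x = gram m \<theta> a x"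
  by (simp add: cross_gram_def gram_def Uop_def)

lemma cross_gram_first_bit:
  assumes "a \<in> bits m" "x \<in> bits m" "x ! 0" "cmod (gam m \<theta> x) < 1"
  shows "cross_gram m \<theta> a x =
    (if a = x then complex_of_real (sqrt (1 - (cmod (gam m \<theta> x))\<^sup>2)) else 0)"
proof -
  define g where "g = gam m \<theta> x"
  define s where "s = sqrt (1 - (cmod g)\<^sup>2)"
  have "0 < 1 - (cmod g)\<^sup>2"
    using assms(4) by (simp add: g_def abs_square_less_1)
  then have s: "s \<noteq> 0" "complex_of_real s * complex_of_real s = 1 - g * cnj g"
    by (auto simp: s_def simp flip: of_real_mult complex_norm_square)
  have "cross_gram m \<theta> a x = (\<Sum>y\<in>bits m.
      (cnj (Mop m \<theta> y a) * Mop m \<theta> y x - g * (cnj (Mop m \<theta> y a) * Mop m \<theta> y (compl_bits x)))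
        / complex_of_real s)"
    unfolding cross_gram_def Uop_def using assms(3)
    by (simp add: g_def s_def algebra_simps)
  also have "\<dots> = (gram m \<theta> a x - g * gram m \<theta> a (compl_bits x)) / complex_of_real s"
    by (simp add: gram_def sum_divide_distrib[symmetric] sum_subtractf sum_distrib_left)
  also have "\<dots> = (if a = x then complex_of_real s else 0)"
  proof -
    consider "a = x" | "a = compl_bits x" "a \<noteq> x" | "a \<noteq> x" "a \<noteq> compl_bits x"
      by blast
    then show ?thesis
    proof cases
      case 1
      then show ?thesis using s by (simp add: gram_compl_right g_def field_simps)
    next
      case 2
      then show ?thesis by (simp add: gam_eq_gram g_def)
    next
      case 3
      moreover have "x \<noteq> compl_bits a"
        using 3 by auto
      ultimately show ?thesis
        using assms(1,2) by (simp add: gram_eq_0)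
    qed
  qed
  finally show ?thesis by (simp add: s_def g_def)
qed

lemma Uop_inner_not_first_bit:
  "\<not> x ! 0 \<Longrightarrow> (\<Sum>y\<in>bits m. cnj (Uop m \<theta> y x) * Uop m \<theta> y x') = cross_gram m \<theta> x x'"
  by (simp add: cross_gram_def Uop_def)

lemma Uop_inner_first_bit:
  assumes "x ! 0"
  shows "(\<Sum>y\<in>bits m. cnj (Uop m \<theta> y x) * Uop m \<theta> y x') =
    (cross_gram m \<theta> x x' - cnj (gam m \<theta> x) * cross_gram m \<theta> (compl_bits x) x')
      / complex_of_real (sqrt (1 - (cmod (gam m \<theta> x))\<^sup>2))"
proof -
  define g where "g = gam m \<theta> x"
  define s where "s = complex_of_real (sqrt (1 - (cmod g)\<^sup>2))"
  have "(\<Sum>y\<in>bits m. cnj (Uop m \<theta> y x) * Uop m \<theta> y x') = (\<Sum>y\<in>bits m.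
      (cnj (Mop m \<theta> y x) * Uop m \<theta> y x' - cnj g * (cnj (Mop m \<theta> y (compl_bits x)) * Uop m \<theta> y x'))
        / s)"
    using assms by (simp add: Uop_def g_def s_def algebra_simps)
  also have "\<dots> = (cross_gram m \<theta> x x' - cnj g * cross_gram m \<theta> (compl_bits x) x') / s"
    by (simp add: cross_gram_def sum_divide_distrib[symmetric] sum_subtractf sum_distrib_left)
  finally show ?thesis by (simp add: g_def s_def)
qed

lemma Uop_orthonormal_cols:
  assumes "0 < m" and gam_lt: "\<forall>x\<in>bits m. cmod (gam m \<theta> x) < 1"
    and x: "x \<in> bits m" and x': "x' \<in> bits m"
  shows "(\<Sum>y\<in>bits m. cnj (Uop m \<theta> y x) * Uop m \<theta> y x') = (if x = x' then 1 else 0)"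
proof -
  have first_compl: "compl_bits z ! 0 = (\<not> z ! 0)" if "z \<in> bits m" for z
    using that \<open>0 < m\<close> by (simp add: bits_def)
  show ?thesis
  proof (cases "x ! 0"; cases "x' ! 0")
    assume "x ! 0" "x' ! 0"
    then have "compl_bits x \<noteq> x'"
      using first_compl[OF x] by auto
    then have "cross_gram m \<theta> (compl_bits x) x' = 0"
      using \<open>x' ! 0\<close> gam_lt x x' by (simp add: cross_gram_first_bit)
    moreover have "0 < sqrt (1 - (cmod (gam m \<theta> x))\<^sup>2)"
      using gam_lt x by (simp add: abs_square_less_1)
    ultimately show ?thesis
      using \<open>x ! 0\<close> \<open>x' ! 0\<close> gam_lt x x'
      by (cases "x = x'") (simp_all add: Uop_inner_first_bit cross_gram_first_bit)
  next
    assume "x ! 0" "\<not> x' ! 0"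
    then have "x \<noteq> x'" by auto
    have "gram m \<theta> x x' - cnj (gam m \<theta> x) * gram m \<theta> (compl_bits x) x' = 0"
    proof (cases "x' = compl_bits x")
      case True
      then show ?thesis by (simp add: gram_compl_right)
    next
      case False
      moreover from False have "compl_bits x \<noteq> x'"
        by auto
      ultimately show ?thesis
        using \<open>x \<noteq> x'\<close> x x' by (simp add: gram_eq_0)
    qed
    then show ?thesis
      using \<open>x ! 0\<close> \<open>\<not> x' ! 0\<close> \<open>x \<noteq> x'\<close>
      by (simp add: Uop_inner_first_bit cross_gram_eq_gram)
  next
    assume "\<not> x ! 0" "x' ! 0"
    then show ?thesis
      using gam_lt x x' by (auto simp: Uop_inner_not_first_bit cross_gram_first_bit)
  next
    assume "\<not> x ! 0" "\<not> x' ! 0"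
    then have "x' \<noteq> compl_bits x"
      using first_compl[OF x] by auto
    then show ?thesis
      using \<open>\<not> x ! 0\<close> \<open>\<not> x' ! 0\<close> x x'
      by (simp add: Uop_inner_not_first_bit cross_gram_eq_gram gram_eq_0)
  qed
qed

lemma unitary_Uop:
  assumes "0 < m" "\<forall>x\<in>bits m. cmod (gam m \<theta> x) < 1"
  shows "unitary_op m (Uop m \<theta>)"
proof -
  have "\<forall>x\<in>bits m. \<forall>x'\<in>bits m.
      (\<Sum>y\<in>bits m. cnj (Uop m \<theta> y x) * Uop m \<theta> y x') = (if x = x' then 1 else 0)"
    using Uop_orthonormal_cols[OF assms] by blast
  with orthonormal_rows_if_orthonormal_cols[OF finite_bits this] show ?thesis
    unfolding unitary_op_def by blast
qed

lemma cmod_diff_square: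
  "(cmod (a - b))\<^sup>2 = Re (cnj a * a) + Re (cnj b * b) - 2 * Re (cnj a * b)"
  unfolding cmod_power2 by (simp add: power2_eq_square algebra_simps)

lemma one_minus_sqrt_one_minus_le:
  fixes t :: real
  assumes "0 \<le> t" "t \<le> 1"
  shows "1 - sqrt (1 - t) \<le> t"
proof -
  have "(1 - t)\<^sup>2 \<le> 1 - t"
    using assms by (simp add: power2_eq_square mult_right_le_one_le)
  then show ?thesis using real_le_rsqrt by force
qed

lemma Uop_col_error_le:
  assumes "0 < m" and gam_lt: "\<forall>x\<in>bits m. cmod (gam m \<theta> x) < 1" and x: "x \<in> bits m"
  shows "(\<Sum>y\<in>bits m. (cmod (Mop m \<theta> y x - Uop m \<theta> y x))\<^sup>2) \<le> 2 * (cmod (gam m \<theta> x))\<^sup>2"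
proof (cases "x ! 0")
  case False
  then show ?thesis by (simp add: Uop_def)
next
  case True
  define g where "g = cmod (gam m \<theta> x)"
  have "(\<Sum>y\<in>bits m. (cmod (Mop m \<theta> y x - Uop m \<theta> y x))\<^sup>2)
      = Re (gram m \<theta> x x) + Re (\<Sum>y\<in>bits m. cnj (Uop m \<theta> y x) * Uop m \<theta> y x)
        - 2 * Re (cross_gram m \<theta> x x)"
    by (simp only: cmod_diff_square sum.distrib sum_subtractf Re_sum gram_def cross_gram_def
        sum_distrib_left)
  also have "\<dots> = 2 - 2 * sqrt (1 - g\<^sup>2)"
    using Uop_orthonormal_cols[OF assms(1,2) x x] cross_gram_first_bit[OF x x True] gam_lt x
    by (simp add: g_def)
  also have "\<dots> \<le> 2 * g\<^sup>2"
    using one_minus_sqrt_one_minus_le[of "g\<^sup>2"] gam_lt x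
    by (simp add: g_def abs_square_le_1 less_imp_le)
  finally show ?thesis by (simp add: g_def)
qed

lemma frob_Mop_Uop_le:
  assumes "0 < m" and gam_le: "\<forall>x\<in>bits m. cmod (gam m \<theta> x) \<le> g" and "g < 1"
  shows "frob m (\<lambda>y x. Mop m \<theta> y x - Uop m \<theta> y x) \<le> sqrt (2 ^ Suc m) * g"
proof -
  have "replicate m False \<in> bits m" by (simp add: bits_def)
  then have "0 \<le> g"
    using gam_le norm_ge_zero order_trans by blast
  have col: "(\<Sum>y\<in>bits m. (cmod (Mop m \<theta> y x - Uop m \<theta> y x))\<^sup>2) \<le> 2 * g\<^sup>2"
    if "x \<in> bits m" for x
  proof -
    have "\<forall>x\<in>bits m. cmod (gam m \<theta> x) < 1"
      using gam_le \<open>g < 1\<close> by fastforce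
    moreover have "(cmod (gam m \<theta> x))\<^sup>2 \<le> g\<^sup>2"
      using gam_le that by (simp add: power_mono)
    ultimately show ?thesis
      using Uop_col_error_le[OF \<open>0 < m\<close> _ that] by fastforce
  qed
  have "frob m (\<lambda>y x. Mop m \<theta> y x - Uop m \<theta> y x) \<le> sqrt (\<Sum>x\<in>bits m. 2 * g\<^sup>2)"
    unfolding frob_def using col by (intro real_sqrt_le_mono sum_mono) auto
  also have "(\<Sum>x\<in>bits m. 2 * g\<^sup>2) = 2 ^ Suc m * g\<^sup>2"
    by (simp add: card_bits)
  also have "sqrt (2 ^ Suc m * g\<^sup>2) = sqrt (2 ^ Suc m) * g"
    using \<open>0 \<le> g\<close> by (simp add: real_sqrt_mult)
  finally show ?thesis .
qed

theorem lemma4p10: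
  fixes m :: nat
  assumes "m \<ge> 1"
  shows "\<exists>C>0. \<exists>\<theta>m. 0 < \<theta>m \<and> \<theta>m < pi / 2 \<and>
           (\<forall>\<theta>. 0 < \<theta> \<and> \<theta> \<le> \<theta>m \<longrightarrow>
              unitary_op m (Uop m \<theta>) \<and>
              frob m (\<lambda>y x. Mop m \<theta> y x - Uop m \<theta> y x) \<le> C * \<theta> ^ m)"
proof (intro exI conjI allI impI)
  show "0 < sqrt (2 ^ Suc m :: real)" by simp
  show "(0 :: real) < 1 / 2" by simp
  show "1 / 2 < pi / 2" using pi_gt3 by simp
  fix \<theta> :: real
  assume \<theta>: "0 < \<theta> \<and> \<theta> \<le> 1 / 2"
  have "\<bar>sin \<theta>\<bar> ^ m \<le> \<theta> ^ m"
    using abs_sin_x_le_abs_x[of \<theta>] \<theta> by (intro power_mono) auto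
  then have gam_le: "\<forall>x\<in>bits m. cmod (gam m \<theta> x) \<le> \<theta> ^ m"
    by (simp add: norm_gam)
  have "\<theta> ^ m < 1"
    using \<theta> assms by (simp add: power_less_one_iff)
  with gam_le have "\<forall>x\<in>bits m. cmod (gam m \<theta> x) < 1"
    by fastforce
  with assms show "unitary_op m (Uop m \<theta>)"
    by (simp add: unitary_Uop)
  show "frob m (\<lambda>y x. Mop m \<theta> y x - Uop m \<theta> y x) \<le> sqrt (2 ^ Suc m) * \<theta> ^ m"
    using frob_Mop_Uop_le[OF _ gam_le \<open>\<theta> ^ m < 1\<close>] assms by simp
qed

end
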